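(* The myopic sensing policy is not optimal in general. More precisely, both of the following hold for $N=6$, $k=3$, $T=2$: (a) there exist transition probabilities with $p_{11}>p_{01}$ and an initial belief vector $\omega(1)\in[0,1]^6$ for which some sensing policy achieves strictly larger expected total reward than the myopic sensing policy; (b) there exist transition probabilities with $p_{11}<p_{01}$ and an initial belief vector $\omega(1)\in[0,1]^6$ for which the same holds.
   Context: Opportunistic spectrum access model. There are $N$ channels. The state $S_i(t)\in\{0,1\}$ of channel $i$ in slot $t$ (0 = busy, 1 = idle) evolves as a two-state discrete-time Markov chain with transition probabilities $p_{ij}=\Pr(S_i(t+1)=j\mid S_i(t)=i)$. The chains are independent across channels and all have the same transition probabilities $p_{01},p_{11}\in[0,1]$. The initial states are independent with $\Pr(S_i(1)=1)=\omega_i(1)$. In each slot $t=1,\dots,T$, a user senses a set of exactly $k$ channels, chosen based on past actions and observations. It observes their states and obtains reward $1$ if at least one sensed channel is idle, and reward $0$ otherwise. The objective is the expected total reward over $T$ slots. Beliefs $\omega_i(t)$ (conditional probability that channel $i$ is idle in slot $t$) update as follows: $\omega_i(t+1)=p_{11}$ if $i$ was sensed and found idle; $\omega_i(t+1)=p_{01}$ if $i$ was sensed and found busy; and $\omega_i(t+1)=\omega_i(t)p_{11}+(1-\omega_i(t))p_{01}$ if $i$ was not sensed. The myopic sensing policy senses, in each slot, $k$ channels with the largest current beliefs. *)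

theory Defs
  imports Complex_Main
begin

text \<open>Channels are indexed 0..N-1. A history is the list of past (sensed set A, set S of
  sensed channels found idle, S \<subseteq> A). A policy maps a history to the set of channels to sense.\<close>

type_synonym history = "(nat set \<times> nat set) list"
type_synonym policy = "history \<Rightarrow> nat set"

definition belief_update :: "real \<Rightarrow> real \<Rightarrow> (nat \<Rightarrow> real) \<Rightarrow> nat set \<times> nat set \<Rightarrow> nat \<Rightarrow> real" where
  "belief_update p01 p11 \<omega> AS = (\<lambda>i. if i \<in> snd AS then p11
       else if i \<in> fst AS then p01
       else \<omega> i * p11 + (1 - \<omega> i) * p01)"

definition belief :: "real \<Rightarrow> real \<Rightarrow> (nat \<Rightarrow> real) \<Rightarrow> history \<Rightarrow> nat \<Rightarrow> real" where
  "belief p01 p11 \<omega>1 h = foldl (belief_update p01 p11) \<omega>1 h"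

text \<open>Expected reward accumulated over the next n slots, given history h.
  Outcome S = set of idle channels among the sensed set A; reward 1 iff S nonempty.\<close>
fun exp_reward :: "real \<Rightarrow> real \<Rightarrow> (nat \<Rightarrow> real) \<Rightarrow> policy \<Rightarrow> nat \<Rightarrow> history \<Rightarrow> real" where
  "exp_reward p01 p11 \<omega>1 \<pi> 0 h = 0"
| "exp_reward p01 p11 \<omega>1 \<pi> (Suc n) h =
     (let b = belief p01 p11 \<omega>1 h; A = \<pi> h in
       (\<Sum>S\<in>Pow A. ((\<Prod>i\<in>S. b i) * (\<Prod>i\<in>A - S. 1 - b i)) *
          ((if S \<noteq> {} then 1 else 0) + exp_reward p01 p11 \<omega>1 \<pi> n (h @ [(A, S)]))))"

definition total_reward :: "real \<Rightarrow> real \<Rightarrow> (nat \<Rightarrow> real) \<Rightarrow> policy \<Rightarrow> nat \<Rightarrow> real" where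
  "total_reward p01 p11 \<omega>1 \<pi> T = exp_reward p01 p11 \<omega>1 \<pi> T []"

definition sensing_policy :: "nat \<Rightarrow> nat \<Rightarrow> policy \<Rightarrow> bool" where
  "sensing_policy N k \<pi> \<longleftrightarrow> (\<forall>h. \<pi> h \<subseteq> {..<N} \<and> card (\<pi> h) = k)"

text \<open>Myopic policy (any tie-breaking): senses k channels with largest current beliefs.\<close>
definition myopic_policy :: "nat \<Rightarrow> nat \<Rightarrow> real \<Rightarrow> real \<Rightarrow> (nat \<Rightarrow> real) \<Rightarrow> policy \<Rightarrow> bool" where
  "myopic_policy N k p01 p11 \<omega>1 \<pi> \<longleftrightarrow> sensing_policy N k \<pi> \<and>
     (\<forall>h. \<forall>i\<in>\<pi> h. \<forall>j\<in>{..<N} - \<pi> h. belief p01 p11 \<omega>1 h j \<le> belief p01 p11 \<omega>1 h i)"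

end

theory Submission
  imports Defs
begin

(* Sensing a set A under beliefs b yields
   outcome S with probability outcome_prob b A S, so the one-slot reward is the success
   probability 1 - prod (1 - b i).  An exchange argument shows that this product is minimal,
   and therefore equal, for every set of k largest beliefs; hence the reward of a myopic
   policy in a slot does not depend on tie-breaking, and a strict gap in the beliefs fixes
   its choice.  A two-slot reward is then a sum over the outcomes of slot one of the
   second-slot success probabilities.  For each of the two instances this reduces both the
   myopic reward and the reward of the competing policy to explicit rational numbers. *)

definition outcome_prob :: "(nat \<Rightarrow> real) \<Rightarrow> nat set \<Rightarrow> nat set \<Rightarrow> real" where
  "outcome_prob b A S = (\<Prod>i\<in>S. b i) * (\<Prod>i\<in>A - S. 1 - b i)"

definition top_set :: "nat \<Rightarrow> nat \<Rightarrow> (nat \<Rightarrow> real) \<Rightarrow> nat set \<Rightarrow> bool" where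
  "top_set N k b D \<longleftrightarrow> D \<subseteq> {..<N} \<and> card D = k \<and> (\<forall>i\<in>D. \<forall>j\<in>{..<N} - D. b j \<le> b i)"

lemma myopic_policy_top_set:
  "myopic_policy N k p01 p11 \<omega>1 \<mu> \<Longrightarrow> top_set N k (belief p01 p11 \<omega>1 h) (\<mu> h)"
  unfolding myopic_policy_def sensing_policy_def top_set_def by blast

lemma belief_Nil [simp]: "belief p01 p11 \<omega>1 [] = \<omega>1"
  by (simp add: belief_def)

lemma exp_reward_Suc_outcomes:
  "exp_reward p01 p11 \<omega>1 \<pi> (Suc n) h =
     (\<Sum>S\<in>Pow (\<pi> h). outcome_prob (belief p01 p11 \<omega>1 h) (\<pi> h) S *
        ((if S \<noteq> {} then 1 else 0) + exp_reward p01 p11 \<omega>1 \<pi> n (h @ [(\<pi> h, S)])))"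
  by (simp add: outcome_prob_def Let_def)

lemma success_probability:
  fixes b :: "nat \<Rightarrow> real"
  assumes "finite A"
  shows "(\<Sum>S\<in>Pow A. outcome_prob b A S * (if S \<noteq> {} then 1 else 0)) = 1 - (\<Prod>i\<in>A. 1 - b i)"
proof -
  have total: "(\<Sum>S\<in>Pow A. outcome_prob b A S) = 1"
    using prod_add[OF assms, of b "\<lambda>i. 1 - b i"] by (simp add: outcome_prob_def)
  have split_empty: "(\<Sum>S\<in>Pow A. outcome_prob b A S) =
      outcome_prob b A {} + (\<Sum>S\<in>Pow A - {{}}. outcome_prob b A S)"
    by (rule sum.remove) (use assms in auto)
  have "(\<Sum>S\<in>Pow A. outcome_prob b A S * (if S \<noteq> {} then 1 else 0)) =
      (\<Sum>S\<in>Pow A - {{}}. outcome_prob b A S)"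
    by (rule sum.mono_neutral_cong_right) (use assms in auto)
  then show ?thesis
    using total split_empty by (simp add: outcome_prob_def)
qed

lemma exp_reward_one_slot:
  assumes "finite (\<pi> h)"
  shows "exp_reward p01 p11 \<omega>1 \<pi> (Suc 0) h = 1 - (\<Prod>i\<in>\<pi> h. 1 - belief p01 p11 \<omega>1 h i)"
  using success_probability[OF assms, of "belief p01 p11 \<omega>1 h"]
  unfolding exp_reward_Suc_outcomes by simp

text \<open>Exchange argument: the failure probability of a set of k largest beliefs is at most
  that of any other set of k channels.\<close>
lemma top_set_prod_le:
  fixes b :: "nat \<Rightarrow> real"
  assumes top: "top_set N k b A" and B: "B \<subseteq> {..<N}" "card B = k"
    and le1: "\<forall>i<N. b i \<le> 1"
  shows "(\<Prod>i\<in>A. 1 - b i) \<le> (\<Prod>i\<in>B. 1 - b i)"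
proof -
  have A: "A \<subseteq> {..<N}" "card A = k" and gap: "\<forall>i\<in>A. \<forall>j\<in>{..<N} - A. b j \<le> b i"
    using top by (auto simp: top_set_def)
  have fin: "finite A" "finite B"
    using A(1) B(1) finite_subset by auto
  have "card (A - B) = card (B - A)"
    using A(2) B(2) fin by (metis card_Diff_subset_Int finite_Int inf_commute)
  then obtain g where g: "bij_betw g (A - B) (B - A)"
    using finite_same_card_bij fin by blast
  have split_A: "(\<Prod>i\<in>A. 1 - b i) = (\<Prod>i\<in>A \<inter> B. 1 - b i) * (\<Prod>i\<in>A - B. 1 - b i)"
    using prod.subset_diff[of "A \<inter> B" A "\<lambda>i. 1 - b i"] fin by (simp add: Diff_Int mult.commute)
  have split_B: "(\<Prod>i\<in>B. 1 - b i) = (\<Prod>i\<in>A \<inter> B. 1 - b i) * (\<Prod>i\<in>B - A. 1 - b i)"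
    using prod.subset_diff[of "A \<inter> B" B "\<lambda>i. 1 - b i"] fin by (simp add: Diff_Int mult.commute)
  have reindex: "(\<Prod>i\<in>B - A. 1 - b i) = (\<Prod>i\<in>A - B. 1 - b (g i))"
    using prod.reindex_bij_betw[OF g, of "\<lambda>i. 1 - b i"] by simp
  have exchange: "(\<Prod>i\<in>A - B. 1 - b i) \<le> (\<Prod>i\<in>A - B. 1 - b (g i))"
  proof (rule prod_mono)
    fix i assume i: "i \<in> A - B"
    then have "g i \<in> B - A" using g bij_betwE by blast
    then show "0 \<le> 1 - b i \<and> 1 - b i \<le> 1 - b (g i)"
      using i A(1) B(1) gap le1 by auto
  qed
  have "0 \<le> (\<Prod>i\<in>A \<inter> B. 1 - b i)"
    by (rule prod_nonneg) (use A(1) le1 in auto)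
  then show ?thesis
    unfolding split_A split_B reindex using exchange by (simp add: mult_left_mono)
qed

text \<open>Consequently the one-slot reward of a myopic policy is the success probability of any
  set of k largest beliefs: it does not depend on how ties are broken.\<close>
lemma myopic_one_slot:
  assumes "myopic_policy N k p01 p11 \<omega>1 \<mu>" and D: "top_set N k (belief p01 p11 \<omega>1 h) D"
    and le1: "\<forall>i<N. belief p01 p11 \<omega>1 h i \<le> 1"
  shows "exp_reward p01 p11 \<omega>1 \<mu> (Suc 0) h = 1 - (\<Prod>i\<in>D. 1 - belief p01 p11 \<omega>1 h i)"
proof -
  have \<mu>: "top_set N k (belief p01 p11 \<omega>1 h) (\<mu> h)"
    using assms(1) by (rule myopic_policy_top_set)
  then have "finite (\<mu> h)"
    by (auto simp: top_set_def intro: finite_subset)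
  moreover have "(\<Prod>i\<in>\<mu> h. 1 - belief p01 p11 \<omega>1 h i) = (\<Prod>i\<in>D. 1 - belief p01 p11 \<omega>1 h i)"
    using top_set_prod_le[OF \<mu> _ _ le1, of D] top_set_prod_le[OF D _ _ le1, of "\<mu> h"] \<mu> D
    by (auto simp: top_set_def)
  ultimately show ?thesis
    by (simp only: exp_reward_one_slot)
qed

lemma top_set_unique:
  assumes top: "top_set N k b A" and D: "D \<subseteq> {..<N}" "card D = k"
    and gap: "\<forall>i\<in>D. \<forall>j\<in>{..<N} - D. b j < b i"
  shows "A = D"
proof (rule ccontr)
  assume "A \<noteq> D"
  have A: "A \<subseteq> {..<N}" "card A = k" "\<forall>i\<in>A. \<forall>j\<in>{..<N} - A. b j \<le> b i"
    using top by (auto simp: top_set_def)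
  have fin: "finite A" "finite D"
    using A(1) D(1) finite_subset by auto
  have "\<not> A \<subseteq> D"
    using \<open>A \<noteq> D\<close> card_subset_eq[OF fin(2)] A(2) D(2) by metis
  then obtain i where i: "i \<in> A" "i \<notin> D" by blast
  have "\<not> D \<subseteq> A"
    using \<open>A \<noteq> D\<close> card_subset_eq[OF fin(1)] A(2) D(2) by metis
  then obtain j where j: "j \<in> D" "j \<notin> A" by blast
  have "b j \<le> b i" using A(3) i j D(1) by auto
  moreover have "b i < b j" using gap i j A(1) by auto
  ultimately show False by simp
qed

text \<open>Two-slot reward: the first-slot success probability plus the expected second-slot
  success probability, where D S is the set whose success probability the policy attains
  after the first-slot outcome S (outcomes of probability zero do not matter).\<close>
lemma total_reward_two_slots:
  assumes "\<And>S. S \<subseteq> \<pi> [] \<Longrightarrow> outcome_prob \<omega>1 (\<pi> []) S \<noteq> 0 \<Longrightarrow>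
      exp_reward p01 p11 \<omega>1 \<pi> (Suc 0) [(\<pi> [], S)] =
        1 - (\<Prod>i\<in>D S. 1 - belief p01 p11 \<omega>1 [(\<pi> [], S)] i)"
  shows "total_reward p01 p11 \<omega>1 \<pi> 2 =
     (\<Sum>S\<in>Pow (\<pi> []). outcome_prob \<omega>1 (\<pi> []) S *
        ((if S \<noteq> {} then 1 else 0) + (1 - (\<Prod>i\<in>D S. 1 - belief p01 p11 \<omega>1 [(\<pi> [], S)] i))))"
  unfolding total_reward_def numeral_2_eq_2 exp_reward_Suc_outcomes[of _ _ _ _ "Suc 0"]
  by (rule sum.cong) (use assms in auto)

lemma total_reward_two_slots_policy:
  assumes "sensing_policy N k \<pi>"
  shows "total_reward p01 p11 \<omega>1 \<pi> 2 =
     (\<Sum>S\<in>Pow (\<pi> []). outcome_prob \<omega>1 (\<pi> []) S *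
        ((if S \<noteq> {} then 1 else 0) +
         (1 - (\<Prod>i\<in>\<pi> [(\<pi> [], S)]. 1 - belief p01 p11 \<omega>1 [(\<pi> [], S)] i))))"
proof (rule total_reward_two_slots)
  fix S
  have "finite (\<pi> [(\<pi> [], S)])"
    using assms by (meson finite_lessThan finite_subset sensing_policy_def)
  then show "exp_reward p01 p11 \<omega>1 \<pi> (Suc 0) [(\<pi> [], S)] =
      1 - (\<Prod>i\<in>\<pi> [(\<pi> [], S)]. 1 - belief p01 p11 \<omega>1 [(\<pi> [], S)] i)"
    by (rule exp_reward_one_slot)
qed

lemma sum_Pow_insert:
  assumes "finite A" "a \<notin> A"
  shows "(\<Sum>S\<in>Pow (insert a A). f S) = (\<Sum>S\<in>Pow A. f S) + (\<Sum>S\<in>Pow A. f (insert a S))"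
proof -
  have "(\<Sum>S\<in>Pow (insert a A). f S) = (\<Sum>S\<in>Pow A. f S) + (\<Sum>S\<in>insert a ` Pow A. f S)"
    unfolding Pow_insert by (rule sum.union_disjoint) (use assms in auto)
  also have "(\<Sum>S\<in>insert a ` Pow A. f S) = (\<Sum>S\<in>Pow A. f (insert a S))"
    by (subst sum.reindex) (use assms in \<open>auto intro!: inj_onI simp: o_def\<close>)
  finally show ?thesis .
qed

lemma sum_Pow_three:
  assumes "a \<noteq> b" "a \<noteq> c" "b \<noteq> c"
  shows "(\<Sum>S\<in>Pow {a,b,c}. f S) = f {} + f {c} + f {b} + f {b,c} + f {a} + f {a,c} + f {a,b} + f {a,b,c}"
  using assms by (simp add: sum_Pow_insert add.assoc)

lemma outcome_prob_sure_channel: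
  assumes "finite A" "b 0 = 1" "0 \<in> A" "0 \<notin> S"
  shows "outcome_prob b A S = 0"
proof -
  have "(\<Prod>i\<in>A - S. 1 - b i) = 0"
    using assms by (intro prod_zero) auto
  then show ?thesis
    by (simp add: outcome_prob_def)
qed

text \<open>Instance (a): p01 = 0, p11 = 3/10.  Channel 0 is surely idle, so the first slot earns
  reward 1 whatever is sensed; the myopic policy senses {0,1,2}, while sensing {0,2,4} gathers
  more useful information for the second slot.\<close>
definition omega_a :: "nat \<Rightarrow> real" where
  "omega_a i = (if i = 0 then 1 else if i = 1 then 9/10 else if i = 2 then 4/5 else if i = 3 then 1/5
           else if i = 4 then 1/5 else 1/10)"

definition pi_a :: policy where
  "pi_a h = (if h = [] then {0,2,4} else (let S = snd (hd h) in
     if 2 \<in> S \<and> 4 \<in> S then {0,2,4} else if 2 \<in> S then {0,1,2} else if 4 \<in> S then {0,1,4}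
     else {0,1,3}))"

lemma sensing_policy_pi_a: "sensing_policy 6 3 pi_a"
  unfolding sensing_policy_def pi_a_def Let_def by auto

lemma total_reward_pi_a: "total_reward 0 (3/10) omega_a pi_a 2 = 2031287 / 1250000"
proof -
  have "total_reward 0 (3/10) omega_a pi_a 2 =
     (\<Sum>S\<in>Pow {0,2,4}. outcome_prob omega_a {0,2,4} S * ((if S \<noteq> {} then 1 else 0) +
        (1 - (\<Prod>i\<in>pi_a [({0,2,4}, S)]. 1 - belief 0 (3/10) omega_a [({0,2,4}, S)] i))))"
    using total_reward_two_slots_policy[OF sensing_policy_pi_a] by (simp add: pi_a_def)
  also have "\<dots> = 2031287 / 1250000"
    by (subst sum_Pow_three) (simp_all add: outcome_prob_def pi_a_def insert_Diff_if
        belief_def belief_update_def omega_a_def)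
  finally show ?thesis .
qed

lemma total_reward_myopic_a:
  assumes myopic: "myopic_policy 6 3 0 (3/10) omega_a \<mu>"
  shows "total_reward 0 (3/10) omega_a \<mu> 2 = 1013071 / 625000"
proof -
  have first: "\<mu> [] = {0,1,2}"
    using top_set_unique[OF myopic_policy_top_set[OF myopic, of "[]"]]
    by (simp add: omega_a_def lessThan_nat_numeral)
  define D :: "nat set \<Rightarrow> nat set" where
    "D S = (if 1 \<in> S \<and> 2 \<in> S then {0,1,2} else if 1 \<in> S then {0,1,4} else if 2 \<in> S then {0,2,4}
            else {0,3,4})" for S
  have second: "exp_reward 0 (3/10) omega_a \<mu> (Suc 0) [({0,1,2}, S)] =
      1 - (\<Prod>i\<in>D S. 1 - belief 0 (3/10) omega_a [({0,1,2}, S)] i)"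
    if "S \<subseteq> {0,1,2}" "outcome_prob omega_a {0,1,2} S \<noteq> 0" for S
  proof (rule myopic_one_slot[OF myopic])
    have "0 \<in> S"
      using that(2) outcome_prob_sure_channel[of "{0,1,2}" omega_a S] by (auto simp: omega_a_def)
    then show "top_set 6 3 (belief 0 (3/10) omega_a [({0,1,2}, S)]) (D S)"
      using that(1) by (cases "1 \<in> S"; cases "2 \<in> S")
        (auto simp: top_set_def D_def belief_def belief_update_def omega_a_def lessThan_nat_numeral)
    show "\<forall>i<6. belief 0 (3/10) omega_a [({0,1,2}, S)] i \<le> 1"
      by (simp add: belief_def belief_update_def omega_a_def)
  qed
  have "total_reward 0 (3/10) omega_a \<mu> 2 =
     (\<Sum>S\<in>Pow {0,1,2}. outcome_prob omega_a {0,1,2} S * ((if S \<noteq> {} then 1 else 0) +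
        (1 - (\<Prod>i\<in>D S. 1 - belief 0 (3/10) omega_a [({0,1,2}, S)] i))))"
    using total_reward_two_slots[of \<mu> omega_a 0 "3/10" D] second by (simp add: first)
  also have "\<dots> = 1013071 / 625000"
    by (subst sum_Pow_three) (simp_all add: outcome_prob_def D_def insert_Diff_if
        belief_def belief_update_def omega_a_def)
  finally show ?thesis .
qed

lemma myopic_suboptimal_a:
  "\<exists>\<pi>. sensing_policy 6 3 \<pi> \<and>
     (\<forall>\<mu>. myopic_policy 6 3 0 (3/10) omega_a \<mu> \<longrightarrow>
        total_reward 0 (3/10) omega_a \<mu> 2 < total_reward 0 (3/10) omega_a \<pi> 2)"
  by (intro exI[of _ pi_a] conjI sensing_policy_pi_a allI impI)
    (simp add: total_reward_pi_a total_reward_myopic_a)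

text \<open>Instance (b): p01 = 4/5, p11 = 0.  Again the first slot earns reward 1 for sure; the
  myopic policy senses {0,1,2}, while sensing {0,2,3} pays off in the second slot.\<close>
definition omega_b :: "nat \<Rightarrow> real" where
  "omega_b i = (if i = 0 then 1 else if i = 1 then 9/10 else if i = 2 then 4/5 else if i = 3 then 1/2
           else if i = 4 then 3/10 else 1/5)"

definition pi_b :: policy where
  "pi_b h = (if h = [] then {0,2,3} else (let S = snd (hd h) in
     if 2 \<in> S \<and> 3 \<in> S then {1,4,5} else if 2 \<in> S then {3,4,5} else if 3 \<in> S then {2,4,5}
     else {2,3,5}))"

lemma sensing_policy_pi_b: "sensing_policy 6 3 pi_b"
  unfolding sensing_policy_def pi_b_def Let_def by auto

lemma total_reward_pi_b: "total_reward (4/5) 0 omega_b pi_b 2 = 150346 / 78125"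
proof -
  have "total_reward (4/5) 0 omega_b pi_b 2 =
     (\<Sum>S\<in>Pow {0,2,3}. outcome_prob omega_b {0,2,3} S * ((if S \<noteq> {} then 1 else 0) +
        (1 - (\<Prod>i\<in>pi_b [({0,2,3}, S)]. 1 - belief (4/5) 0 omega_b [({0,2,3}, S)] i))))"
    using total_reward_two_slots_policy[OF sensing_policy_pi_b] by (simp add: pi_b_def)
  also have "\<dots> = 150346 / 78125"
    by (subst sum_Pow_three) (simp_all add: outcome_prob_def pi_b_def insert_Diff_if
        belief_def belief_update_def omega_b_def)
  finally show ?thesis .
qed

lemma total_reward_myopic_b:
  assumes myopic: "myopic_policy 6 3 (4/5) 0 omega_b \<mu>"
  shows "total_reward (4/5) 0 omega_b \<mu> 2 = 150238 / 78125"
proof -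
  have first: "\<mu> [] = {0,1,2}"
    using top_set_unique[OF myopic_policy_top_set[OF myopic, of "[]"]]
    by (simp add: omega_b_def lessThan_nat_numeral)
  define D :: "nat set \<Rightarrow> nat set" where
    "D S = (if 1 \<in> S \<and> 2 \<in> S then {3,4,5} else if 1 \<in> S then {2,4,5} else if 2 \<in> S then {1,4,5}
            else {1,2,5})" for S
  have second: "exp_reward (4/5) 0 omega_b \<mu> (Suc 0) [({0,1,2}, S)] =
      1 - (\<Prod>i\<in>D S. 1 - belief (4/5) 0 omega_b [({0,1,2}, S)] i)"
    if "S \<subseteq> {0,1,2}" "outcome_prob omega_b {0,1,2} S \<noteq> 0" for S
  proof (rule myopic_one_slot[OF myopic])
    have "0 \<in> S"
      using that(2) outcome_prob_sure_channel[of "{0,1,2}" omega_b S] by (auto simp: omega_b_def)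
    then show "top_set 6 3 (belief (4/5) 0 omega_b [({0,1,2}, S)]) (D S)"
      using that(1) by (cases "1 \<in> S"; cases "2 \<in> S")
        (auto simp: top_set_def D_def belief_def belief_update_def omega_b_def lessThan_nat_numeral)
    show "\<forall>i<6. belief (4/5) 0 omega_b [({0,1,2}, S)] i \<le> 1"
      by (simp add: belief_def belief_update_def omega_b_def)
  qed
  have "total_reward (4/5) 0 omega_b \<mu> 2 =
     (\<Sum>S\<in>Pow {0,1,2}. outcome_prob omega_b {0,1,2} S * ((if S \<noteq> {} then 1 else 0) +
        (1 - (\<Prod>i\<in>D S. 1 - belief (4/5) 0 omega_b [({0,1,2}, S)] i))))"
    using total_reward_two_slots[of \<mu> omega_b "4/5" 0 D] second by (simp add: first)
  also have "\<dots> = 150238 / 78125"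
    by (subst sum_Pow_three) (simp_all add: outcome_prob_def D_def insert_Diff_if
        belief_def belief_update_def omega_b_def)
  finally show ?thesis .
qed

lemma myopic_suboptimal_b:
  "\<exists>\<pi>. sensing_policy 6 3 \<pi> \<and>
     (\<forall>\<mu>. myopic_policy 6 3 (4/5) 0 omega_b \<mu> \<longrightarrow>
        total_reward (4/5) 0 omega_b \<mu> 2 < total_reward (4/5) 0 omega_b \<pi> 2)"
  by (intro exI[of _ pi_b] conjI sensing_policy_pi_b allI impI)
    (simp add: total_reward_pi_b total_reward_myopic_b)

lemma initial_beliefs_valid: "\<forall>i<6. omega_a i \<in> {0..1}" "\<forall>i<6. omega_b i \<in> {0..1}"
  by (simp_all add: omega_a_def omega_b_def)

theorem theorem3:
  shows "(\<exists>p01 p11 \<omega>1. p01 \<in> {0..1} \<and> p11 \<in> {0..1} \<and> p11 > p01 \<and> (\<forall>i<6. \<omega>1 i \<in> {0..1}) \<and>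
            (\<exists>\<pi>. sensing_policy 6 3 \<pi> \<and>
               (\<forall>\<mu>. myopic_policy 6 3 p01 p11 \<omega>1 \<mu> \<longrightarrow>
                    total_reward p01 p11 \<omega>1 \<mu> 2 < total_reward p01 p11 \<omega>1 \<pi> 2)))
       \<and> (\<exists>p01 p11 \<omega>1. p01 \<in> {0..1} \<and> p11 \<in> {0..1} \<and> p11 < p01 \<and> (\<forall>i<6. \<omega>1 i \<in> {0..1}) \<and>
            (\<exists>\<pi>. sensing_policy 6 3 \<pi> \<and>
               (\<forall>\<mu>. myopic_policy 6 3 p01 p11 \<omega>1 \<mu> \<longrightarrow>
                    total_reward p01 p11 \<omega>1 \<mu> 2 < total_reward p01 p11 \<omega>1 \<pi> 2)))"
proof (intro conjI)
  show "\<exists>p01 p11 \<omega>1. p01 \<in> {0..1} \<and> p11 \<in> {0..1} \<and> p11 > p01 \<and> (\<forall>i<6. \<omega>1 i \<in> {0..1}) \<and>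
            (\<exists>\<pi>. sensing_policy 6 3 \<pi> \<and>
               (\<forall>\<mu>. myopic_policy 6 3 p01 p11 \<omega>1 \<mu> \<longrightarrow>
                    total_reward p01 p11 \<omega>1 \<mu> 2 < total_reward p01 p11 \<omega>1 \<pi> 2))"
    using myopic_suboptimal_a initial_beliefs_valid(1)
    by (intro exI[of _ 0] exI[of _ "3/10"] exI[of _ omega_a]) simp
  show "\<exists>p01 p11 \<omega>1. p01 \<in> {0..1} \<and> p11 \<in> {0..1} \<and> p11 < p01 \<and> (\<forall>i<6. \<omega>1 i \<in> {0..1}) \<and>
            (\<exists>\<pi>. sensing_policy 6 3 \<pi> \<and>
               (\<forall>\<mu>. myopic_policy 6 3 p01 p11 \<omega>1 \<mu> \<longrightarrow>
                    total_reward p01 p11 \<omega>1 \<mu> 2 < total_reward p01 p11 \<omega>1 \<pi> 2))"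
    using myopic_suboptimal_b initial_beliefs_valid(2)
    by (intro exI[of _ "4/5"] exI[of _ 0] exI[of _ omega_b]) simp
qed

end
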